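(* Let $\mathbf{s}_1,\dots,\mathbf{s}_l\in\mathbb{Q}^n$, let $\mathcal P\subseteq\mathbb{R}^n$ be the convex hull of $\bigcup_{i=1}^l(\mathbf{s}_i+\mathbb{R}_{\le0}^n)$ and $P=\mathcal P\cap\mathbb{Q}^n$. Then $$K\{\mathbf{X};P\}=\bigcap_{i=1}^l K\{\mathbf{X};\mathbf{s}_i\}.$$
   Context: $K$ is a field complete for a discrete valuation $\mathrm{val}$. For $\mathbf{r}\in\mathbb{Q}^n$, $\mathrm{val}_{\mathbf{r}}(a\mathbf{X}^\alpha)=\mathrm{val}(a)-\mathbf{r}\cdot\alpha$, and $K\{\mathbf{X};\mathbf{r}\}$ is the set of power series $\sum_{\alpha\in\mathbb{N}^n}a_\alpha\mathbf{X}^\alpha$ ($a_\alpha\in K$) with $\mathrm{val}_{\mathbf{r}}(a_\alpha\mathbf{X}^\alpha)\to+\infty$ as $|\alpha|\to\infty$. For $P\subseteq\mathbb{Q}^n$, $K\{\mathbf{X};P\}$ is the set of power series $\sum a_\alpha\mathbf{X}^\alpha$ such that for every $\mathbf{r}\in P$, $\mathrm{val}_{\mathbf{r}}(a_\alpha\mathbf{X}^\alpha)\to+\infty$ as $|\alpha|\to\infty$. *)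

theory Defs
  imports "HOL-Analysis.Analysis"
begin

text \<open>A discrete (normalised) valuation on a field, given on nonzero elements
  (the value of 0 is +infinity by convention and is never consulted).\<close>
definition discrete_valuation :: "('a::field \<Rightarrow> int) \<Rightarrow> bool" where
  "discrete_valuation v \<longleftrightarrow>
     (\<forall>x y. x \<noteq> 0 \<longrightarrow> y \<noteq> 0 \<longrightarrow> v (x * y) = v x + v y) \<and>
     (\<forall>x y. x \<noteq> 0 \<longrightarrow> y \<noteq> 0 \<longrightarrow> x + y \<noteq> 0 \<longrightarrow> v (x + y) \<ge> min (v x) (v y)) \<and>
     (\<forall>k. \<exists>x. x \<noteq> 0 \<and> v x = k)"

definition val_complete :: "('a::field \<Rightarrow> int) \<Rightarrow> bool" where
  "val_complete v \<longleftrightarrow>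
     (\<forall>x :: nat \<Rightarrow> 'a.
        (\<forall>M. \<exists>N. \<forall>m\<ge>N. \<forall>n\<ge>N. x m = x n \<or> v (x m - x n) \<ge> M) \<longrightarrow>
        (\<exists>L. \<forall>M. \<exists>N. \<forall>n\<ge>N. x n = L \<or> v (x n - L) \<ge> M))"

text \<open>The r-valuation of a X^alpha is val a - r . alpha (+infinity if a = 0).
  K{X;r}: val_r(a_alpha X^alpha) tends to +infinity as |alpha| tends to infinity.\<close>
definition restricted_ps :: "('a::field \<Rightarrow> int) \<Rightarrow> real^'n \<Rightarrow> (nat^'n \<Rightarrow> 'a) set" where
  "restricted_ps v r = {a. \<forall>M::real. \<exists>d::nat. \<forall>\<alpha>::nat^'n. (\<Sum>i\<in>UNIV. \<alpha>$i) > d \<longrightarrow>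
      a \<alpha> = 0 \<or> M \<le> real_of_int (v (a \<alpha>)) - (\<Sum>i\<in>UNIV. r$i * real (\<alpha>$i))}"

definition restricted_ps_set :: "('a::field \<Rightarrow> int) \<Rightarrow> (real^'n) set \<Rightarrow> (nat^'n \<Rightarrow> 'a) set" where
  "restricted_ps_set v P = {a. \<forall>r\<in>P. a \<in> restricted_ps v r}"

definition rat_vecs :: "(real^'n) set" where
  "rat_vecs = {x. \<forall>i. x$i \<in> \<rat>}"

definition nonpos_orthant :: "(real^'n) set" where
  "nonpos_orthant = {y. \<forall>i. y$i \<le> 0}"

end

theory Submission
  imports Defs
begin

text \<open>For a fixed series \<open>a\<close>, the set of \<open>r\<close> with \<open>a \<in> K{X;r}\<close> is convex, because each
  \<open>val\<^sub>r(a\<^sub>\<alpha> X\<^sup>\<alpha>)\<close> is affine in \<open>r\<close>, and it is closed under decreasing \<open>r\<close>, because the exponents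
  \<open>\<alpha>\<close> are nonnegative. Hence it contains the convex hull of the orthants \<open>s\<^sub>i + \<real>\<^sup>n\<^sub>\<le>\<^sub>0\<close> as soon
  as it contains the \<open>s\<^sub>i\<close>; the converse inclusion holds since each \<open>s\<^sub>i\<close> is a rational
  point of that hull.\<close>

definition monomial_val :: "('a::field \<Rightarrow> int) \<Rightarrow> (nat^'n \<Rightarrow> 'a) \<Rightarrow> real^'n \<Rightarrow> nat^'n \<Rightarrow> real"
  where "monomial_val v a r \<alpha> = real_of_int (v (a \<alpha>)) - (\<Sum>i\<in>UNIV. r$i * real (\<alpha>$i))"

lemma restricted_ps_iff:
  "a \<in> restricted_ps v r \<longleftrightarrow>
     (\<forall>M. \<exists>d. \<forall>\<alpha>. (\<Sum>i\<in>UNIV. \<alpha>$i) > d \<longrightarrow> a \<alpha> = 0 \<or> M \<le> monomial_val v a r \<alpha>)"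
  by (simp add: restricted_ps_def monomial_val_def)

lemma monomial_val_antimono:
  fixes r s :: "real^'n"
  assumes "r \<le> s"
  shows "monomial_val v a s \<alpha> \<le> monomial_val v a r \<alpha>"
proof -
  have "(\<Sum>i\<in>UNIV. r$i * real (\<alpha>$i)) \<le> (\<Sum>i\<in>UNIV. s$i * real (\<alpha>$i))"
    using assms by (intro sum_mono mult_right_mono) (auto simp: less_eq_vec_def)
  then show ?thesis
    by (simp add: monomial_val_def)
qed

lemma monomial_val_affine:
  assumes "u + w = 1"
  shows "monomial_val v a (u *\<^sub>R r + w *\<^sub>R q) \<alpha> = u * monomial_val v a r \<alpha> + w * monomial_val v a q \<alpha>"
proof -
  have "real_of_int (v (a \<alpha>)) = u * real_of_int (v (a \<alpha>)) + w * real_of_int (v (a \<alpha>))"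
    using assms by (simp flip: distrib_right)
  then show ?thesis
    by (simp add: monomial_val_def sum.distrib sum_distrib_left algebra_simps)
qed

lemma restricted_ps_antimono:
  fixes r s :: "real^'n"
  assumes "r \<le> s"
  shows "restricted_ps v s \<subseteq> restricted_ps v r"
proof
  fix a assume "a \<in> restricted_ps v s"
  show "a \<in> restricted_ps v r"
    unfolding restricted_ps_iff
  proof
    fix M
    obtain d where "\<And>\<alpha>. (\<Sum>i\<in>UNIV. \<alpha>$i) > d \<Longrightarrow> a \<alpha> = 0 \<or> M \<le> monomial_val v a s \<alpha>"
      using \<open>a \<in> restricted_ps v s\<close> unfolding restricted_ps_iff by blast
    then show "\<exists>d. \<forall>\<alpha>. (\<Sum>i\<in>UNIV. \<alpha>$i) > d \<longrightarrow> a \<alpha> = 0 \<or> M \<le> monomial_val v a r \<alpha>"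
      using monomial_val_antimono[OF assms] order_trans by blast
  qed
qed

lemma convex_restricted_ps_radii: "convex {r :: real^'n. a \<in> restricted_ps v r}"
proof (rule convexI, clarsimp)
  fix r q :: "real^'n" and u w :: real
  assume r: "a \<in> restricted_ps v r" and q: "a \<in> restricted_ps v q"
    and "0 \<le> u" "0 \<le> w" "u + w = 1"
  show "a \<in> restricted_ps v (u *\<^sub>R r + w *\<^sub>R q)"
    unfolding restricted_ps_iff
  proof
    fix M
    obtain d\<^sub>r where d\<^sub>r: "\<And>\<alpha>. (\<Sum>i\<in>UNIV. \<alpha>$i) > d\<^sub>r \<Longrightarrow> a \<alpha> = 0 \<or> M \<le> monomial_val v a r \<alpha>"
      using r unfolding restricted_ps_iff by blast
    obtain d\<^sub>q where d\<^sub>q: "\<And>\<alpha>. (\<Sum>i\<in>UNIV. \<alpha>$i) > d\<^sub>q \<Longrightarrow> a \<alpha> = 0 \<or> M \<le> monomial_val v a q \<alpha>"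
      using q unfolding restricted_ps_iff by blast
    have "a \<alpha> = 0 \<or> M \<le> monomial_val v a (u *\<^sub>R r + w *\<^sub>R q) \<alpha>"
      if "(\<Sum>i\<in>UNIV. \<alpha>$i) > max d\<^sub>r d\<^sub>q" for \<alpha>
    proof (cases "a \<alpha> = 0")
      case False
      with that d\<^sub>r d\<^sub>q have "M \<le> monomial_val v a r \<alpha>" "M \<le> monomial_val v a q \<alpha>"
        by auto
      then have "u * M + w * M \<le> u * monomial_val v a r \<alpha> + w * monomial_val v a q \<alpha>"
        using \<open>0 \<le> u\<close> \<open>0 \<le> w\<close> by (intro add_mono mult_left_mono)
      then show ?thesis
        using \<open>u + w = 1\<close> by (simp add: monomial_val_affine flip: distrib_right)
    qed simp
    then show "\<exists>d. \<forall>\<alpha>. (\<Sum>i\<in>UNIV. \<alpha>$i) > d \<longrightarrow>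
        a \<alpha> = 0 \<or> M \<le> monomial_val v a (u *\<^sub>R r + w *\<^sub>R q) \<alpha>"
      by blast
  qed
qed

theorem mainTheorem12:
  fixes v :: "'a::field \<Rightarrow> int" and l :: nat and s :: "nat \<Rightarrow> real^'n"
  assumes "discrete_valuation v" and "val_complete v"
    and "\<forall>i\<in>{1..l}. s i \<in> rat_vecs"
  shows "restricted_ps_set v
           ((convex hull (\<Union>i\<in>{1..l}. (\<lambda>y. s i + y) ` nonpos_orthant)) \<inter> rat_vecs)
         = (\<Inter>i\<in>{1..l}. restricted_ps v (s i))"
proof -
  let ?S = "\<Union>i\<in>{1..l}. (\<lambda>y. s i + y) ` nonpos_orthant"
  have vertex_in_hull: "s i \<in> convex hull ?S \<inter> rat_vecs" if "i \<in> {1..l}" for i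
  proof -
    have "s i + 0 \<in> (\<lambda>y. s i + y) ` nonpos_orthant"
      by (intro imageI) (simp add: nonpos_orthant_def)
    then have "s i \<in> convex hull ?S"
      using that by (intro hull_inc) auto
    then show ?thesis
      using that assms(3) by simp
  qed
  have hull_in_radii: "convex hull ?S \<subseteq> {r. a \<in> restricted_ps v r}"
    if a: "a \<in> (\<Inter>i\<in>{1..l}. restricted_ps v (s i))" for a
  proof (rule hull_minimal[of _ _ convex, OF _ convex_restricted_ps_radii])
    have "s i + y \<le> s i" if "y \<in> nonpos_orthant" for i y
      using that by (simp add: nonpos_orthant_def less_eq_vec_def)
    then show "?S \<subseteq> {r. a \<in> restricted_ps v r}"
      using a restricted_ps_antimono by blast
  qed
  show ?thesis
  proof
    show "restricted_ps_set v (convex hull ?S \<inter> rat_vecs) \<subseteq> (\<Inter>i\<in>{1..l}. restricted_ps v (s i))"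
      using vertex_in_hull by (auto simp: restricted_ps_set_def)
    show "(\<Inter>i\<in>{1..l}. restricted_ps v (s i)) \<subseteq> restricted_ps_set v (convex hull ?S \<inter> rat_vecs)"
      using hull_in_radii by (auto simp: restricted_ps_set_def)
  qed
qed

end
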